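(* Let $X$ be a $3$-dimensional Minkowski space whose closed unit ball has no $2$-dimensional face. Then $m(X)=4$.
   Context: A Minkowski space is a finite-dimensional real normed space $(X,\|\cdot\|)$. For a set $S\subseteq X$, its midpoint set is $M(S)=\{\tfrac12(x+y): x,y\in S,\ x\neq y\}$. A set $S\subseteq X$ is an M-set if every vector in $M(S)$ has norm exactly $1$ and every vector in $S$ has norm strictly greater than $1$. $m(X)$ denotes the largest cardinality of an M-set in $X$ if such a largest finite cardinality exists, and $m(X)=\infty$ otherwise. *)

theory Defs
  imports "HOL-Analysis.Analysis"
begin

text \<open>A norm on a real vector space, given as an explicit function.
  A 3-dimensional Minkowski space is (up to isometry) the space real^3 with such a norm.\<close>
definition is_norm :: "('a::real_vector \<Rightarrow> real) \<Rightarrow> bool" where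
  "is_norm N \<longleftrightarrow>
     (\<forall>x. 0 \<le> N x) \<and> (\<forall>x. N x = 0 \<longleftrightarrow> x = 0) \<and>
     (\<forall>c x. N (c *\<^sub>R x) = \<bar>c\<bar> * N x) \<and>
     (\<forall>x y. N (x + y) \<le> N x + N y)"

definition unit_ball :: "('a::real_vector \<Rightarrow> real) \<Rightarrow> 'a set" where
  "unit_ball N = {x. N x \<le> 1}"

definition midpoint_set :: "'a::real_vector set \<Rightarrow> 'a set" where
  "midpoint_set S = {(1/2) *\<^sub>R (x + y) | x y. x \<in> S \<and> y \<in> S \<and> x \<noteq> y}"

definition M_set :: "('a::real_vector \<Rightarrow> real) \<Rightarrow> 'a set \<Rightarrow> bool" where
  "M_set N S \<longleftrightarrow> (\<forall>v \<in> midpoint_set S. N v = 1) \<and> (\<forall>x \<in> S. N x > 1)"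

definition m_num :: "('a::real_vector \<Rightarrow> real) \<Rightarrow> enat" where
  "m_num N = (SUP S \<in> {S. M_set N S}. (if finite S then enat (card S) else \<infinity>))"

end

theory Submission
  imports Defs
begin

(* Let S be an M-set for a norm N on a 3-dimensional space whose unit ball B
   has no 2-dimensional face.  Every point y admits a supporting functional w of the norm
   (w y = N y and w \<le> N everywhere), and B \<inter> {w = 1} is then an exposed face of B;
   without 2-dimensional faces such a face is collinear.
   Upper bound: a point of S never lies in the convex hull of other points of S (test it
   against its supporting functional), and no open segment between two points of S meets
   the convex hull of the remaining ones (otherwise three points of S lie on one supporting
   hyperplane and the midpoints of their pairs span a 2-dimensional face).  By Radon's
   theorem any five points of S would give such a configuration, so |S| \<le> 4.
   Lower bound: pick a unit vector p, its supporting plane, whose face is a segment through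
   p in direction u, and two unit vectors e, f parallel to that plane with e \<plusminus> f not
   parallel to u; then {p + (e+f), p - (e+f), -p + (e-f), -p - (e-f)} is an M-set with
   midpoints \<plusminus>p, \<plusminus>e, \<plusminus>f. *)

section \<open>Elementary properties of a norm\<close>

lemma is_norm_zero: "is_norm N \<Longrightarrow> N 0 = 0"
  unfolding is_norm_def by blast

lemma is_norm_scale: "is_norm N \<Longrightarrow> N (c *\<^sub>R x) = \<bar>c\<bar> * N x"
  unfolding is_norm_def by blast

lemma is_norm_neg: "is_norm N \<Longrightarrow> N (- x) = N x"
  using is_norm_scale[of N "-1" x] by simp

lemma is_norm_triangle: "is_norm N \<Longrightarrow> N (x + y) \<le> N x + N y"
  unfolding is_norm_def by blast

lemma is_norm_pos: "is_norm N \<Longrightarrow> x \<noteq> 0 \<Longrightarrow> N x > 0"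
  unfolding is_norm_def by (metis less_eq_real_def)

lemma is_norm_normalize: "is_norm N \<Longrightarrow> x \<noteq> 0 \<Longrightarrow> N ((1 / N x) *\<^sub>R x) = 1"
  using is_norm_scale[of N "1 / N x" x] is_norm_pos[of N x] by simp

lemma convex_unit_ball:
  assumes "is_norm N" shows "convex (unit_ball N)"
  unfolding convex_def unit_ball_def
proof (clarsimp)
  fix x y :: 'a and u v :: real
  assume h: "N x \<le> 1" "N y \<le> 1" "0 \<le> u" "0 \<le> v" "u + v = 1"
  have "N (u *\<^sub>R x + v *\<^sub>R y) \<le> N (u *\<^sub>R x) + N (v *\<^sub>R y)" using is_norm_triangle[OF assms] .
  also have "\<dots> = u * N x + v * N y" using is_norm_scale[OF assms] h by simp
  also have "\<dots> \<le> u * 1 + v * 1" using h by (intro add_mono mult_left_mono) auto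
  finally show "N (u *\<^sub>R x + v *\<^sub>R y) \<le> 1" using h by simp
qed

section \<open>Supporting functionals and exposed faces\<close>

definition in_dual_ball :: "('a::real_inner \<Rightarrow> real) \<Rightarrow> 'a \<Rightarrow> bool" where
  "in_dual_ball N w \<longleftrightarrow> (\<forall>x. w \<bullet> x \<le> N x)"

definition exposed_face :: "('a::real_inner \<Rightarrow> real) \<Rightarrow> 'a \<Rightarrow> 'a set" where
  "exposed_face N w = unit_ball N \<inter> {y. w \<bullet> y = 1}"

text \<open>Points of the unit sphere are not relative interior points of the unit ball, since
  the ball contains 0 and therefore the ray through such a point.\<close>
lemma unit_sphere_not_rel_interior:
  fixes N :: "'a::euclidean_space \<Rightarrow> real"
  assumes nN: "is_norm N" and Nv: "N v = 1"
  shows "v \<notin> rel_interior (unit_ball N)"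
proof
  assume "v \<in> rel_interior (unit_ball N)"
  then obtain e where e: "e > 0" "ball v e \<inter> affine hull (unit_ball N) \<subseteq> unit_ball N"
    unfolding mem_rel_interior_ball by blast
  have v0: "v \<noteq> 0" using Nv is_norm_zero[OF nN] by auto
  define d where "d = e / (2 * norm v)"
  have d: "d > 0" using e v0 by (simp add: d_def)
  define z where "z = (1 + d) *\<^sub>R v"
  have "dist v z = d * norm v" unfolding z_def dist_norm
    using d by (simp add: algebra_simps)
  also have "\<dots> = e / 2" using v0 by (simp add: d_def)
  finally have "z \<in> ball v e" using e by simp
  moreover have "z \<in> affine hull (unit_ball N)"
  proof -
    have "v \<in> unit_ball N" "0 \<in> unit_ball N"
      using Nv is_norm_zero[OF nN] unfolding unit_ball_def by simp_all
    then have "(1 + d) *\<^sub>R v + (- d) *\<^sub>R 0 \<in> affine hull (unit_ball N)"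
      by (intro mem_affine[OF affine_affine_hull]) (auto intro: hull_inc)
    then show ?thesis by (simp add: z_def)
  qed
  ultimately have "N z \<le> 1" using e unfolding unit_ball_def by blast
  moreover have "N z = 1 + d" using is_norm_scale[OF nN] Nv d by (simp add: z_def)
  ultimately show False using d by simp
qed

text \<open>Every vector is normed by some functional of the dual unit ball (Hahn--Banach in
  finite dimensions, obtained from a supporting hyperplane of the unit ball).\<close>
lemma norming_functional:
  fixes N :: "'a::euclidean_space \<Rightarrow> real"
  assumes nN: "is_norm N"
  shows "\<exists>w. w \<bullet> y = N y \<and> in_dual_ball N w"
proof (cases "y = 0")
  case True
  then show ?thesis using nN unfolding is_norm_def in_dual_ball_def by (intro exI[of _ 0]) auto
next
  case False
  define v where "v = (1 / N y) *\<^sub>R y"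
  have Nv: "N v = 1" using is_norm_normalize[OF nN False] v_def by simp
  have vB: "v \<in> unit_ball N" using Nv unfolding unit_ball_def by simp
  obtain a where a: "a \<noteq> 0" "\<And>z. z \<in> unit_ball N \<Longrightarrow> a \<bullet> v \<le> a \<bullet> z"
    using supporting_hyperplane_rel_boundary[OF convex_unit_ball[OF nN] vB
        unit_sphere_not_rel_interior[OF nN Nv]] by metis
  text \<open>By homogeneity the supporting inequality on the ball extends to all of space.\<close>
  have bound: "- a \<bullet> x \<le> (- a \<bullet> v) * N x" for x
  proof (cases "x = 0")
    case True then show ?thesis using is_norm_zero[OF nN] by simp
  next
    case False
    have "(1 / N x) *\<^sub>R x \<in> unit_ball N"
      using is_norm_normalize[OF nN False] unfolding unit_ball_def by simp
    from a(2)[OF this] have "(1 / N x) * (- a \<bullet> x) \<le> - a \<bullet> v" by simp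
    then show ?thesis using is_norm_pos[OF nN False] by (simp add: field_simps mult.commute)
  qed
  have av: "- a \<bullet> v > 0"
  proof (rule ccontr)
    assume "\<not> - a \<bullet> v > 0"
    then have "(- a) \<bullet> (- a) \<le> 0" using bound[of "- a"] is_norm_pos[OF nN, of "- a"] a(1)
      by (smt (verit) mult_nonpos_nonneg neg_equal_0_iff_equal)
    then show False using a(1) by (metis inner_gt_zero_iff neg_equal_0_iff_equal not_le)
  qed
  define w where "w = (1 / (- a \<bullet> v)) *\<^sub>R (- a)"
  have "in_dual_ball N w"
    unfolding in_dual_ball_def using bound av by (simp add: w_def field_simps)
  moreover have "w \<bullet> y = N y"
  proof -
    have "y = N y *\<^sub>R v" using is_norm_pos[OF nN False] by (simp add: v_def)
    then have "w \<bullet> y = N y * (w \<bullet> v)" by (metis inner_scaleR_right)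
    also have "w \<bullet> v = 1" using av by (simp add: w_def)
    finally show ?thesis by simp
  qed
  ultimately show ?thesis by blast
qed

lemma exposed_face_face_of:
  fixes N :: "'a::euclidean_space \<Rightarrow> real"
  assumes nN: "is_norm N" and w: "in_dual_ball N w"
  shows "exposed_face N w face_of unit_ball N"
    and "aff_dim (exposed_face N w) \<le> int DIM('a) - 1"
proof -
  show "exposed_face N w face_of unit_ball N" unfolding exposed_face_def
    by (rule face_of_Int_supporting_hyperplane_le[OF convex_unit_ball[OF nN]])
       (use w in \<open>auto simp: unit_ball_def in_dual_ball_def intro: order_trans\<close>)
  show "aff_dim (exposed_face N w) \<le> int DIM('a) - 1"
  proof (cases "w = 0")
    case True
    then show ?thesis by (simp add: exposed_face_def)
  next
    case False
    have "aff_dim (exposed_face N w) \<le> aff_dim {y. w \<bullet> y = 1}"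
      unfolding exposed_face_def by (rule aff_dim_subset) auto
    then show ?thesis using False by simp
  qed
qed

lemma exposed_face_collinear:
  fixes N :: "real^3 \<Rightarrow> real"
  assumes nN: "is_norm N" and nf: "\<not> (\<exists>F. F face_of unit_ball N \<and> aff_dim F = 2)"
    and w: "in_dual_ball N w"
  shows "collinear (exposed_face N w)"
proof -
  have "aff_dim (exposed_face N w) \<noteq> 2" using exposed_face_face_of(1)[OF nN w] nf by blast
  with exposed_face_face_of(2)[OF nN w] show ?thesis by (simp add: collinear_aff_dim)
qed

section \<open>Basic properties of M-sets\<close>

lemma M_set_midpoint:
  "M_set N S \<Longrightarrow> a \<in> S \<Longrightarrow> b \<in> S \<Longrightarrow> a \<noteq> b \<Longrightarrow> N ((1/2) *\<^sub>R (a + b)) = 1"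
  unfolding M_set_def midpoint_set_def by blast

lemma M_set_point: "M_set N S \<Longrightarrow> a \<in> S \<Longrightarrow> N a > 1"
  unfolding M_set_def by blast

lemma M_set_pair_bound:
  assumes "M_set N S" "a \<in> S" "b \<in> S" "a \<noteq> b" "in_dual_ball N w"
  shows "w \<bullet> a + w \<bullet> b \<le> 2"
proof -
  have "w \<bullet> ((1/2) *\<^sub>R (a + b)) \<le> 1"
    using assms M_set_midpoint[OF assms(1-4)] unfolding in_dual_ball_def by metis
  then show ?thesis by (simp add: inner_add_right)
qed

lemma M_set_not_in_hull:
  fixes N :: "'a::euclidean_space \<Rightarrow> real"
  assumes nN: "is_norm N" and M: "M_set N S" and a: "a \<in> S" and J: "J \<subseteq> S" "a \<notin> J"
  shows "a \<notin> convex hull J"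
proof
  assume h: "a \<in> convex hull J"
  obtain w where w: "w \<bullet> a = N a" "in_dual_ball N w" using norming_functional[OF nN] by blast
  have "J \<subseteq> {y. w \<bullet> y \<le> 2 - w \<bullet> a}"
    using M_set_pair_bound[OF M a _ _ w(2)] J by fastforce
  then have "convex hull J \<subseteq> {y. w \<bullet> y \<le> 2 - w \<bullet> a}"
    by (intro hull_minimal convex_halfspace_le)
  with h have "w \<bullet> a \<le> 1" by auto
  with w M_set_point[OF M a] show False by simp
qed

lemma M_set_not_collinear:
  fixes N :: "'a::euclidean_space \<Rightarrow> real"
  assumes nN: "is_norm N" and M: "M_set N S"
    and abc: "a \<in> S" "b \<in> S" "c \<in> S" "a \<noteq> b" "a \<noteq> c" "b \<noteq> c"
  shows "\<not> collinear {a, b, c}"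
proof
  assume "collinear {a, b, c}"
  then have "a \<in> convex hull {b, c} \<or> b \<in> convex hull {c, a} \<or> c \<in> convex hull {a, b}"
    by (simp add: collinear_between_cases between_mem_segment segment_convex_hull)
  then show False
    using M_set_not_in_hull[OF nN M abc(1), of "{b, c}"] M_set_not_in_hull[OF nN M abc(2), of "{c, a}"]
      M_set_not_in_hull[OF nN M abc(3), of "{a, b}"] abc by auto
qed

text \<open>The triangle of midpoints is the image of the triangle under a homothety with
  ratio -1/2, so it is collinear only if the triangle is.\<close>
lemma collinear_midpoint_triangle:
  fixes a b x :: "'a::real_vector"
  assumes "collinear {(1/2) *\<^sub>R (b + x), (1/2) *\<^sub>R (a + x), (1/2) *\<^sub>R (a + b)}"
  shows "collinear {a, b, x}"
proof -
  define \<phi> where "\<phi> y = (1/2) *\<^sub>R (a + b + x) - (1/2) *\<^sub>R y" for y :: 'a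
  have img: "\<phi> a = (1/2) *\<^sub>R (b + x)" "\<phi> b = (1/2) *\<^sub>R (a + x)" "\<phi> x = (1/2) *\<^sub>R (a + b)"
    unfolding \<phi>_def by (simp_all add: algebra_simps)
  from assms obtain u where u: "\<forall>p\<in>{\<phi> a, \<phi> b, \<phi> x}. \<forall>q\<in>{\<phi> a, \<phi> b, \<phi> x}. \<exists>k. p - q = k *\<^sub>R u"
    unfolding collinear_def img by blast
  have "\<exists>k. p - q = k *\<^sub>R u" if "p \<in> {a, b, x}" "q \<in> {a, b, x}" for p q
  proof -
    have "\<phi> p \<in> {\<phi> a, \<phi> b, \<phi> x}" "\<phi> q \<in> {\<phi> a, \<phi> b, \<phi> x}" using that by auto
    then obtain k where k: "\<phi> p - \<phi> q = k *\<^sub>R u" using u by blast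
    have "p - q = (-2) *\<^sub>R (\<phi> p - \<phi> q)" unfolding \<phi>_def by (simp add: algebra_simps)
    then have "p - q = (-2 * k) *\<^sub>R u" using k by simp
    then show ?thesis by blast
  qed
  then show ?thesis unfolding collinear_def by blast
qed

section \<open>The upper bound\<close>

text \<open>Without 2-dimensional faces, no supporting plane contains three points of an
  M-set: the three midpoints would lie in a collinear exposed face.\<close>
lemma M_set_three_on_supporting_plane:
  fixes N :: "real^3 \<Rightarrow> real"
  assumes nN: "is_norm N" and nf: "\<not> (\<exists>F. F face_of unit_ball N \<and> aff_dim F = 2)"
    and M: "M_set N S" and w: "in_dual_ball N w"
    and abx: "a \<in> S" "b \<in> S" "x \<in> S" "a \<noteq> b" "a \<noteq> x" "b \<noteq> x"
    and on: "w \<bullet> a = 1" "w \<bullet> b = 1" "w \<bullet> x = 1"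
  shows False
proof -
  have mid: "(1/2) *\<^sub>R (p + q) \<in> exposed_face N w"
    if "p \<in> {a, b, x}" "q \<in> {a, b, x}" "p \<noteq> q" for p q
  proof -
    have "p \<in> S" "q \<in> S" "w \<bullet> p = 1" "w \<bullet> q = 1" using that abx on by auto
    then show ?thesis using M_set_midpoint[OF M _ _ that(3)]
      unfolding exposed_face_def unit_ball_def by (simp add: inner_add_right)
  qed
  have "{(1/2) *\<^sub>R (b + x), (1/2) *\<^sub>R (a + x), (1/2) *\<^sub>R (a + b)} \<subseteq> exposed_face N w"
    using mid abx by auto
  then have "collinear {(1/2) *\<^sub>R (b + x), (1/2) *\<^sub>R (a + x), (1/2) *\<^sub>R (a + b)}"
    using collinear_subset exposed_face_collinear[OF nN nf w] by blast
  then have "collinear {a, b, x}" by (rule collinear_midpoint_triangle)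
  then show False using M_set_not_collinear[OF nN M abx] by simp
qed

lemma M_set_segment_not_in_hull:
  fixes N :: "real^3 \<Rightarrow> real"
  assumes nN: "is_norm N" and nf: "\<not> (\<exists>F. F face_of unit_ball N \<and> aff_dim F = 2)"
    and M: "M_set N S" and ab: "a \<in> S" "b \<in> S" "a \<noteq> b"
    and J: "J \<subseteq> S" "a \<notin> J" "b \<notin> J" and t: "0 < t" "t < 1"
  shows "(1 - t) *\<^sub>R a + t *\<^sub>R b \<notin> convex hull J"
proof
  define z where "z = (1 - t) *\<^sub>R a + t *\<^sub>R b"
  assume "(1 - t) *\<^sub>R a + t *\<^sub>R b \<in> convex hull J"
  then have z: "z \<in> convex hull J" by (simp add: z_def)
  obtain w where w: "w \<bullet> ((1/2) *\<^sub>R (a + b)) = 1" "in_dual_ball N w"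
    using norming_functional[OF nN] M_set_midpoint[OF M ab] by metis
  have wab: "w \<bullet> a + w \<bullet> b = 2" using w(1) by (simp add: inner_add_right)
  have J_below: "w \<bullet> x \<le> min (w \<bullet> a) (w \<bullet> b)" if "x \<in> J" for x
  proof -
    have "x \<in> S" "a \<noteq> x" "b \<noteq> x" using that J by auto
    then have "w \<bullet> a + w \<bullet> x \<le> 2" "w \<bullet> b + w \<bullet> x \<le> 2"
      using M_set_pair_bound[OF M ab(1) _ _ w(2), of x] M_set_pair_bound[OF M ab(2) _ _ w(2), of x]
      by auto
    then show ?thesis using wab by linarith
  qed
  have "convex hull J \<subseteq> {y. w \<bullet> y \<le> min (w \<bullet> a) (w \<bullet> b)}"
    using J_below by (intro hull_minimal convex_halfspace_le) auto
  moreover have wz: "w \<bullet> z = (1 - t) * (w \<bullet> a) + t * (w \<bullet> b)"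
    by (simp add: z_def inner_add_right)
  ultimately have "(1 - t) * (w \<bullet> a) + t * (w \<bullet> b) \<le> min (w \<bullet> a) (w \<bullet> b)"
    using z by auto
  then have "t * (w \<bullet> b - w \<bullet> a) \<le> 0" "(1 - t) * (w \<bullet> a - w \<bullet> b) \<le> 0"
    by (simp_all add: algebra_simps)
  then have "w \<bullet> a = w \<bullet> b" using t by (auto simp: mult_le_0_iff)
  then have wa: "w \<bullet> a = 1" "w \<bullet> b = 1" using wab by auto
  then have "w \<bullet> z = 1" using wz by (simp add: algebra_simps)
  text \<open>Since z lies on the plane w = 1, some point of J does as well.\<close>
  obtain x where x: "x \<in> J" "w \<bullet> x \<ge> 1"
  proof (rule ccontr)
    assume "\<not> thesis"
    then have "J \<subseteq> {y. w \<bullet> y < 1}" using that by force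
    then have "convex hull J \<subseteq> {y. w \<bullet> y < 1}" by (intro hull_minimal convex_halfspace_lt)
    with z \<open>w \<bullet> z = 1\<close> show False by auto
  qed
  have wx: "w \<bullet> x = 1" using x J_below wa by force
  have xS: "x \<in> S" "a \<noteq> x" "b \<noteq> x" using x J by auto
  show False using M_set_three_on_supporting_plane[OF nN nf M w(2) ab(1,2) xS(1) ab(3) xS(2,3) wa wx] .
qed

lemma M_set_small_Radon_part:
  fixes N :: "real^3 \<Rightarrow> real"
  assumes nN: "is_norm N" and nf: "\<not> (\<exists>F. F face_of unit_ball N \<and> aff_dim F = 2)"
    and M: "M_set N S" and sub: "A \<subseteq> S" "P \<subseteq> S" and dis: "A \<inter> P = {}"
    and fin: "finite A" and cA: "card A \<le> 2"
  shows "convex hull A \<inter> convex hull P = {}"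
proof -
  have vertex: "a \<notin> convex hull P" if "a \<in> A" for a
  proof (rule M_set_not_in_hull[OF nN M _ sub(2)])
    show "a \<in> S" "a \<notin> P" using that sub dis by auto
  qed
  consider "A = {}" | a where "A = {a}" | a b where "A = {a, b}" "a \<noteq> b"
  proof -
    have "card A = 0 \<or> card A = 1 \<or> card A = 2" using cA by linarith
    then show thesis using that fin by (elim disjE) (auto simp: card_1_singleton_iff card_2_iff)
  qed
  then show ?thesis
  proof cases
    case (2 a)
    then show ?thesis using vertex by auto
  next
    case (3 a b)
    have ab: "a \<in> S" "b \<in> S" "a \<notin> P" "b \<notin> P" using 3(1) sub dis by auto
    have "z \<notin> convex hull P" if z: "z \<in> closed_segment a b" for z
    proof -
      obtain t where t: "0 \<le> t" "t \<le> 1" "z = (1 - t) *\<^sub>R a + t *\<^sub>R b"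
        using z unfolding closed_segment_def by blast
      consider "t = 0" | "t = 1" | "0 < t" "t < 1" using t(1,2) by linarith
      then show ?thesis
      proof cases
        case 1 then show ?thesis using t(3) vertex 3(1) by simp
      next
        case 2 then show ?thesis using t(3) vertex 3(1) by simp
      next
        case 3 then show ?thesis
          using t(3) M_set_segment_not_in_hull[OF nN nf M ab(1,2) \<open>a \<noteq> b\<close> sub(2) ab(3,4)] by simp
      qed
    qed
    then show ?thesis using 3 by (auto simp: segment_convex_hull)
  qed simp
qed

lemma M_set_card_le_4:
  fixes N :: "real^3 \<Rightarrow> real"
  assumes nN: "is_norm N" and nf: "\<not> (\<exists>F. F face_of unit_ball N \<and> aff_dim F = 2)"
    and M: "M_set N S"
  shows "finite S \<and> card S \<le> 4"
proof (rule ccontr)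
  assume big: "\<not> (finite S \<and> card S \<le> 4)"
  obtain T where T: "T \<subseteq> S" "card T = 5" "finite T"
  proof (cases "finite S")
    case True
    with big have "5 \<le> card S" by simp
    then show ?thesis using obtain_subset_with_card_n that by metis
  next
    case False
    then show ?thesis using infinite_arbitrarily_large that by metis
  qed
  have "affine_dependent T"
    by (rule affine_dependent_biggerset) (use T in auto)
  then obtain A P where AP: "A \<inter> P = {}" "A \<union> P = T" "convex hull A \<inter> convex hull P \<noteq> {}"
    using Radon_partition[OF T(3)] by blast
  have fin: "finite A" "finite P" using AP(2) T(3) by (metis finite_Un)+
  have "card A + card P = 5" using AP(1,2) T(2) fin card_Un_disjoint by metis
  then have "card A \<le> 2 \<or> card P \<le> 2" by linarith
  then show False
  proof
    assume "card A \<le> 2"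
    then show False using M_set_small_Radon_part[OF nN nf M, of A P] AP T fin by auto
  next
    assume "card P \<le> 2"
    then show False using M_set_small_Radon_part[OF nN nf M, of P A] AP T fin by (auto simp: Int_commute)
  qed
qed

section \<open>A four-point M-set\<close>

lemma is_norm_normalize_in_span:
  assumes "is_norm N" "x \<noteq> 0"
  shows "(1 / N x) *\<^sub>R x \<in> span V \<longleftrightarrow> x \<in> span V"
proof
  assume "(1 / N x) *\<^sub>R x \<in> span V"
  then have "N x *\<^sub>R ((1 / N x) *\<^sub>R x) \<in> span V" by (rule span_mul)
  then show "x \<in> span V" using is_norm_pos[OF assms] by simp
qed (rule span_mul)

lemma unit_pair_avoiding_line:
  fixes N :: "'a::euclidean_space \<Rightarrow> real"
  assumes nN: "is_norm N" and K: "subspace K" "dim K \<ge> 2"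
  obtains e f where "e \<in> K" "f \<in> K" "N e = 1" "N f = 1"
    "e + f \<notin> span {u}" "e - f \<notin> span {u}"
proof -
  have outside: "\<exists>x\<in>K. x \<notin> span {v}" for v
  proof (rule ccontr)
    assume "\<not> ?thesis"
    then have "K \<subseteq> span {v}" by auto
    then have "dim K \<le> dim (span {v})" by (rule dim_subset)
    also have "\<dots> \<le> 1" by simp
    finally show False using K(2) by simp
  qed
  have unit_outside: "\<exists>x\<in>K. N x = 1 \<and> x \<notin> span {v}" for v
  proof -
    obtain x where x: "x \<in> K" "x \<notin> span {v}" using outside by blast
    then have "x \<noteq> 0" using span_zero by auto
    then show ?thesis using x is_norm_normalize[OF nN] is_norm_normalize_in_span[OF nN]
      by (intro bexI[of _ "(1 / N x) *\<^sub>R x"]) (auto intro: subspace_mul[OF K(1)])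
  qed
  obtain e where e: "e \<in> K" "N e = 1" "e \<notin> span {u}" using unit_outside by blast
  show thesis
  proof (cases "\<exists>f\<in>K. f \<noteq> 0 \<and> f \<in> span {u}")
    case True
    then obtain f0 where f0: "f0 \<in> K" "f0 \<noteq> 0" "f0 \<in> span {u}" by blast
    define f where "f = (1 / N f0) *\<^sub>R f0"
    have f: "f \<in> K" "N f = 1" "f \<in> span {u}"
      using f0 subspace_mul[OF K(1)] is_norm_normalize[OF nN] is_norm_normalize_in_span[OF nN]
      unfolding f_def by auto
    have "e + f \<notin> span {u}" using span_diff[of "e + f" "{u}" f] f(3) e(3) by auto
    moreover have "e - f \<notin> span {u}" using span_add[of "e - f" "{u}" f] f(3) e(3) by auto
    ultimately show thesis using that e f by blast
  next
    case False
    text \<open>The line meets K only in 0: it suffices that e \<plusminus> f are nonzero.\<close>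
    obtain f where f: "f \<in> K" "N f = 1" "f \<notin> span {e}" using unit_outside by blast
    have "e + f \<noteq> 0"
    proof
      assume "e + f = 0"
      then have "f = - e" by (simp add: eq_neg_iff_add_eq_0 add.commute)
      then show False using f(3) by (simp add: span_base span_neg)
    qed
    moreover have "e - f \<noteq> 0" using f(3) span_base[of e "{e}"] by auto
    moreover have "e + f \<in> K" "e - f \<in> K" using e f subspace_add subspace_diff K(1) by blast+
    ultimately show thesis using that e f False by blast
  qed
qed

lemma four_point_M_set:
  fixes N :: "'a::real_inner \<Rightarrow> real"
  assumes nN: "is_norm N" and unit: "N p = 1" "N e = 1" "N f = 1"
    and w: "w \<bullet> p \<noteq> 0" "w \<bullet> e = 0" "w \<bullet> f = 0" and nz: "e + f \<noteq> 0" "e - f \<noteq> 0"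
    and outside: "N (p + (e + f)) > 1" "N (p - (e + f)) > 1"
      "N (p + (e - f)) > 1" "N (p - (e - f)) > 1"
  defines "S \<equiv> {p + (e + f), p - (e + f), - p + (e - f), - p - (e - f)}"
  shows "M_set N S" and "card S = 4"
proof -
  define A B C D where "A = p + (e + f)" "B = p - (e + f)" "C = - p + (e - f)" "D = - p - (e - f)"
  have wS: "w \<bullet> A = w \<bullet> p" "w \<bullet> B = w \<bullet> p" "w \<bullet> C = - (w \<bullet> p)" "w \<bullet> D = - (w \<bullet> p)"
    using w unfolding A_B_C_D_def by (auto simp: inner_add_right inner_diff_right)
  have "A - B = 2 *\<^sub>R (e + f)" "C - D = 2 *\<^sub>R (e - f)"
    unfolding A_B_C_D_def by (simp_all add: scaleR_2)
  then have "A \<noteq> B" "C \<noteq> D" using nz by auto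
  moreover have "A \<noteq> C" "A \<noteq> D" "B \<noteq> C" "B \<noteq> D" using wS w(1) by force+
  ultimately show "card S = 4" unfolding S_def A_B_C_D_def[symmetric] by simp
  have sums: "A + B = 2 *\<^sub>R p" "A + C = 2 *\<^sub>R e" "A + D = 2 *\<^sub>R f"
    "B + C = 2 *\<^sub>R (- f)" "B + D = 2 *\<^sub>R (- e)" "C + D = 2 *\<^sub>R (- p)"
    unfolding A_B_C_D_def by (simp_all add: scaleR_2 algebra_simps)
  then have "(1/2) *\<^sub>R (x + y) \<in> {p, - p, e, - e, f, - f}"
    if "x \<in> {A, B, C, D}" "y \<in> {A, B, C, D}" "x \<noteq> y" for x y
    using that by (auto simp: add.commute[of _ A] add.commute[of D] add.commute[of C B])
  then have mid: "(1/2) *\<^sub>R (x + y) \<in> {p, - p, e, - e, f, - f}"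
    if "x \<in> S" "y \<in> S" "x \<noteq> y" for x y
    using that unfolding S_def A_B_C_D_def[symmetric] by blast
  have "N z = 1" if "z \<in> {p, - p, e, - e, f, - f}" for z
    using that unit is_norm_neg[OF nN] by auto
  moreover have "N x > 1" if "x \<in> S" for x
    using that outside is_norm_neg[OF nN, of "p - (e - f)"] is_norm_neg[OF nN, of "p + (e - f)"]
    unfolding S_def by (auto simp: algebra_simps)
  ultimately show "M_set N S"
    unfolding M_set_def midpoint_set_def using mid by blast
qed


text \<open>Without 2-dimensional faces, the exposed face through a unit vector p is contained in
  a line p + span {u}; hence all other points p + y of the supporting plane lie outside
  the unit ball.\<close>
lemma supporting_plane_outside_line:
  fixes N :: "real^3 \<Rightarrow> real"
  assumes nN: "is_norm N" and nf: "\<not> (\<exists>F. F face_of unit_ball N \<and> aff_dim F = 2)"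
    and w: "in_dual_ball N w" and p: "p \<in> exposed_face N w"
  obtains u where "\<And>y. w \<bullet> y = 0 \<Longrightarrow> y \<notin> span {u} \<Longrightarrow> N (p + y) > 1"
proof -
  obtain u where u: "\<forall>x\<in>exposed_face N w. \<forall>z\<in>exposed_face N w. \<exists>c. x - z = c *\<^sub>R u"
    using exposed_face_collinear[OF nN nf w] unfolding collinear_def by blast
  have "N (p + y) > 1" if y: "w \<bullet> y = 0" "y \<notin> span {u}" for y
  proof (rule ccontr)
    assume "\<not> N (p + y) > 1"
    moreover have "w \<bullet> (p + y) = 1"
      using p y unfolding exposed_face_def by (simp add: inner_add_right)
    ultimately have "p + y \<in> exposed_face N w" unfolding exposed_face_def unit_ball_def by simp
    then obtain c where "(p + y) - p = c *\<^sub>R u" using u p by blast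
    then have "y \<in> span {u}" by (simp add: span_base span_mul)
    with y show False by simp
  qed
  then show thesis using that by blast
qed

lemma exists_M_set_4:
  fixes N :: "real^3 \<Rightarrow> real"
  assumes nN: "is_norm N" and nf: "\<not> (\<exists>F. F face_of unit_ball N \<and> aff_dim F = 2)"
  shows "\<exists>S. M_set N S \<and> finite S \<and> card S = 4"
proof -
  define p :: "real^3" where "p = (1 / N (axis 1 1)) *\<^sub>R axis 1 1"
  have Np: "N p = 1" unfolding p_def by (rule is_norm_normalize[OF nN]) (simp add: axis_eq_0_iff)
  obtain w where w: "w \<bullet> p = 1" "in_dual_ball N w" using norming_functional[OF nN] Np by metis
  have "p \<in> exposed_face N w" using Np w(1) unfolding exposed_face_def unit_ball_def by simp
  then obtain u where outside: "\<And>y. w \<bullet> y = 0 \<Longrightarrow> y \<notin> span {u} \<Longrightarrow> N (p + y) > 1"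
    using supporting_plane_outside_line[OF nN nf w(2)] by blast
  define K where "K = {y :: real^3. w \<bullet> y = 0}"
  have "w \<noteq> 0" using w(1) by auto
  then have K: "subspace K" "dim K \<ge> 2"
    unfolding K_def using subspace_hyperplane[of w] dim_hyperplane[of w] by auto
  obtain e f where ef: "e \<in> K" "f \<in> K" "N e = 1" "N f = 1"
    and avoid: "e + f \<notin> span {u}" "e - f \<notin> span {u}"
    using unit_pair_avoiding_line[OF nN K] by blast
  have plus_minus: "N (p + y) > 1 \<and> N (p - y) > 1" if "y \<in> K" "y \<notin> span {u}" for y
    using outside[of y] outside[of "- y"] that span_neg[of "- y" "{u}"] unfolding K_def by auto
  have "e + f \<in> K" "e - f \<in> K" using ef subspace_add subspace_diff K(1) by blast+
  then have "N (p + (e + f)) > 1" "N (p - (e + f)) > 1" "N (p + (e - f)) > 1" "N (p - (e - f)) > 1"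
    using plus_minus avoid by auto
  moreover have "w \<bullet> e = 0" "w \<bullet> f = 0" using ef(1,2) unfolding K_def by auto
  moreover have "e + f \<noteq> 0" "e - f \<noteq> 0" using avoid span_zero by metis+
  ultimately have "M_set N {p + (e + f), p - (e + f), - p + (e - f), - p - (e - f)}"
    and "card {p + (e + f), p - (e + f), - p + (e - f), - p - (e - f)} = 4"
    using four_point_M_set[OF nN Np ef(3,4), of w] w(1) by simp_all
  then show ?thesis by (intro exI[of _ "{p + (e + f), p - (e + f), - p + (e - f), - p - (e - f)}"]) simp
qed

lemma m_num_eqI:
  assumes upper: "\<And>S. M_set N S \<Longrightarrow> finite S \<and> card S \<le> n"
    and attained: "M_set N S0" "finite S0" "card S0 = n"
  shows "m_num N = enat n"
  unfolding m_num_def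
proof (rule antisym)
  show "(SUP S \<in> {S. M_set N S}. if finite S then enat (card S) else \<infinity>) \<le> enat n"
    using upper by (intro SUP_least) auto
  have "enat n = (if finite S0 then enat (card S0) else \<infinity>)" using attained by simp
  also have "\<dots> \<le> (SUP S \<in> {S. M_set N S}. if finite S then enat (card S) else \<infinity>)"
    using attained by (intro SUP_upper) auto
  finally show "enat n \<le> (SUP S \<in> {S. M_set N S}. if finite S then enat (card S) else \<infinity>)" .
qed

theorem theorem4:
  fixes N :: "real^3 \<Rightarrow> real"
  assumes "is_norm N"
    and "\<not> (\<exists>F. F face_of unit_ball N \<and> aff_dim F = 2)"
  shows "m_num N = 4"
proof -
  obtain S0 where "M_set N S0" "finite S0" "card S0 = 4" using exists_M_set_4[OF assms] by blast
  then have "m_num N = enat 4" using m_num_eqI M_set_card_le_4[OF assms] by blast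
  then show ?thesis by (simp add: numeral_eq_enat)
qed

end
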